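(* Let $X$ be a smooth complex algebraic variety, $f\in\mathcal{O}_X(X)$ nonzero, $\pi\colon X\times\mathbb{C}\to X$ the projection, and $\alpha\in\mathbb{Q}$. Define $\tau_\alpha\colon\pi_*V^\alpha\iota_+\mathcal{O}_X\to\mathcal{M}(f^{-\alpha})$ by $$\tau_\alpha\Big(\sum_{i=0}^pv_i\partial_t^i\delta\Big)=\Big(\sum_{i=0}^pQ_i(\alpha)\frac{v_i}{f^i}\Big)f^{-\alpha},\qquad Q_i(x)=\prod_{j=0}^{i-1}(x+j),\ Q_0=1.$$ Then $\tau_\alpha$ is a morphism of $\mathscr{D}_X$-modules, and, identifying $\mathcal{M}(f^{-\alpha})$ with $\mathcal{M}(f^{-\alpha-1})$ via $wf^{-\alpha}\mapsto(wf)f^{-\alpha-1}$, we have $\tau_{\alpha+1}(tv)=\tau_\alpha(v)$ for every $v\in V^\alpha\iota_+\mathcal{O}_X$ and $\tau_\alpha(\partial_tv)=\alpha\,\tau_{\alpha+1}(v)$ for every $v\in V^{\alpha+1}\iota_+\mathcal{O}_X$.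
   Context: $\iota\colon X\to X\times\mathbb{C}$ is the graph embedding of $f$, $t$ the coordinate on $\mathbb{C}$; $\iota_+\mathcal{O}_X=\bigoplus_{i\ge0}\mathcal{O}_X\partial_t^i\delta$ uniquely, $\delta$ the class of $1/(f-t)$, with $t(v\partial_t^i\delta)=fv\partial_t^i\delta-iv\partial_t^{i-1}\delta$ and $P(v\partial_t^i\delta)=P(v)\partial_t^i\delta-P(f)v\partial_t^{i+1}\delta$ for derivations $P$. $(V^\beta)_{\beta\in\mathbb{Q}}$ is the decreasing Kashiwara–Malgrange $V$-filtration along $t=0$ (with $tV^\beta\subseteq V^{\beta+1}$, $\partial_tV^\beta\subseteq V^{\beta-1}$). $\mathcal{M}(f^{-\alpha})=\mathcal{O}_X[1/f]f^{-\alpha}$, free of rank one over $\mathcal{O}_X[1/f]$, with $P(wf^{-\alpha})=(P(w)-\alpha wP(f)/f)f^{-\alpha}$. *)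

theory Defs
  imports Complex_Main
begin

text \<open>K (the type 'a) is a field of characteristic 0
 containing the ring of regular functions O = O_X(U) of an affine open U of X,
 with a structure embedding emb of the complex numbers into O.
 Elements of the direct image iota_+ O_X are encoded by coefficient sequences
 v :: nat => 'a, v i \<in> O, finitely supported, standing for sum_i v_i dt^i delta.
 Elements w f^(-alpha) of M(f^(-alpha)) are encoded by their coefficient w in O[1/f].\<close>

definition is_subring :: "'a::field_char_0 set \<Rightarrow> bool" where
  "is_subring R \<longleftrightarrow> 0 \<in> R \<and> 1 \<in> R \<and>
     (\<forall>x\<in>R. \<forall>y\<in>R. x + y \<in> R \<and> x - y \<in> R \<and> x * y \<in> R)"

definition is_C_embedding :: "(complex \<Rightarrow> 'a::field_char_0) \<Rightarrow> 'a set \<Rightarrow> bool" where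
  "is_C_embedding emb R \<longleftrightarrow> emb 1 = 1 \<and> (\<forall>z w. emb (z + w) = emb z + emb w) \<and>
     (\<forall>z w. emb (z * w) = emb z * emb w) \<and> range emb \<subseteq> R"

text \<open>A C-linear derivation of K preserving O (i.e. the unique extension to K of a
 C-linear derivation of O = O_X(U), a vector field on U).\<close>
definition is_derivation :: "(complex \<Rightarrow> 'a::field_char_0) \<Rightarrow> 'a set \<Rightarrow> ('a \<Rightarrow> 'a) \<Rightarrow> bool" where
  "is_derivation emb R P \<longleftrightarrow> (\<forall>x y. P (x + y) = P x + P y) \<and>
     (\<forall>x y. P (x * y) = x * P y + P x * y) \<and>
     (\<forall>z x. P (emb z * x) = emb z * P x) \<and> P ` R \<subseteq> R"

definition iplus :: "'a::field_char_0 set \<Rightarrow> (nat \<Rightarrow> 'a) set" where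
  "iplus R = {v. finite {i. v i \<noteq> 0} \<and> (\<forall>i. v i \<in> R)}"

text \<open>t (v dt^i delta) = f v dt^i delta - i v dt^(i-1) delta\<close>
definition t_act :: "'a::field_char_0 \<Rightarrow> (nat \<Rightarrow> 'a) \<Rightarrow> (nat \<Rightarrow> 'a)" where
  "t_act f v = (\<lambda>i. f * v i - of_nat (Suc i) * v (Suc i))"

definition dt_act :: "(nat \<Rightarrow> 'a::field_char_0) \<Rightarrow> (nat \<Rightarrow> 'a)" where
  "dt_act v = (\<lambda>i. case i of 0 \<Rightarrow> 0 | Suc j \<Rightarrow> v j)"

text \<open>P (v dt^i delta) = P(v) dt^i delta - P(f) v dt^(i+1) delta\<close>
definition der_act :: "('a::field_char_0 \<Rightarrow> 'a) \<Rightarrow> 'a \<Rightarrow> (nat \<Rightarrow> 'a) \<Rightarrow> (nat \<Rightarrow> 'a)" where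
  "der_act P f v = (\<lambda>i. P (v i) - (case i of 0 \<Rightarrow> 0 | Suc j \<Rightarrow> P f * v j))"

definition mult_act :: "'a::field_char_0 \<Rightarrow> (nat \<Rightarrow> 'a) \<Rightarrow> (nat \<Rightarrow> 'a)" where
  "mult_act a v = (\<lambda>i. a * v i)"

definition localization :: "'a::field_char_0 set \<Rightarrow> 'a \<Rightarrow> 'a set" where
  "localization R f = {a / f ^ k | a k. a \<in> R}"

text \<open>Action of a vector field on M(f^(-alpha)), on coefficients:
 P(w f^(-alpha)) = (P(w) - alpha w P(f)/f) f^(-alpha).\<close>
definition M_der :: "('a::field_char_0 \<Rightarrow> 'a) \<Rightarrow> 'a \<Rightarrow> rat \<Rightarrow> 'a \<Rightarrow> 'a" where
  "M_der P f \<alpha> w = P w - of_rat \<alpha> * w * P f / f"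

text \<open>tau_alpha (sum v_i dt^i delta) = (sum Q_i(alpha) v_i / f^i) f^(-alpha),
 Q_i(x) = x(x+1)...(x+i-1) = pochhammer x i.\<close>
definition tau :: "'a::field_char_0 \<Rightarrow> rat \<Rightarrow> (nat \<Rightarrow> 'a) \<Rightarrow> 'a" where
  "tau f \<alpha> v = (\<Sum>i\<in>{i. v i \<noteq> 0}. of_rat (pochhammer \<alpha> i) * v i / f ^ i)"

end

theory Submission
  imports Defs
begin

(* Everything reduces to identities between the finite sums  sum_i Q_i(alpha) v_i / f^i.
   Compatibility with t and dt comes from  Q_i(alpha+1) - i Q_(i-1)(alpha+1) = Q_i(alpha)  and
   Q_(i+1)(alpha) = alpha Q_i(alpha+1)  after a shift of the summation index; compatibility with
   a vector field P comes from  Q_(i+1)(alpha) = (alpha+i) Q_i(alpha)  together with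
   P(f^-i) = -i P(f) f^(-i-1). *)

lemma of_rat_pochhammer:
  "of_rat (pochhammer q n) = pochhammer (of_rat q :: 'a::field_char_0) n"
  by (induction n) (simp_all add: pochhammer_rec' of_rat_add of_rat_mult)

lemma pochhammer_plus_one_diff:
  fixes a :: "'a::comm_ring_1"
  shows "pochhammer (a + 1) n - of_nat n * pochhammer (a + 1) (n - 1) = pochhammer a n"
proof (cases n)
  case (Suc m)
  have "pochhammer (a + 1) (Suc m) = (a + 1 + of_nat m) * pochhammer (a + 1) m"
    by (rule pochhammer_rec')
  moreover have "pochhammer a (Suc m) = a * pochhammer (a + 1) m"
    by (rule pochhammer_rec)
  ultimately show ?thesis using Suc by (simp add: algebra_simps)
qed simp

lemma C_embedding_of_int:
  assumes "is_C_embedding emb R"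
  shows "emb (of_int k) = of_int k"
proof -
  have add: "emb (z + w) = emb z + emb w" and one: "emb 1 = 1" for z w
    using assms unfolding is_C_embedding_def by auto
  have zero: "emb 0 = 0" using add[of 0 0] by simp
  have uminus: "emb (- z) = - emb z" for z
    using add[of "- z" z] zero by (simp add: eq_neg_iff_add_eq_0)
  have "emb (of_nat n) = of_nat n" for n
    by (induction n) (simp_all add: zero add one)
  then show ?thesis
    by (cases k rule: int_cases) (simp_all add: uminus del: of_nat_Suc)
qed

lemma C_embedding_of_rat:
  assumes "is_C_embedding emb R"
  shows "emb (of_rat q) = of_rat q"
proof (cases q)
  case (Fract a b)
  then have b: "b \<noteq> 0" and q: "(of_rat q :: complex) = of_int a / of_int b"
    by (simp_all add: of_rat_rat)
  have "emb (of_int a / of_int b) * of_int b = of_int a"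
    using assms unfolding is_C_embedding_def
    by (metis C_embedding_of_int[OF assms] b nonzero_divide_eq_eq of_int_eq_0_iff)
  then show ?thesis using Fract b by (simp add: q of_rat_rat field_simps)
qed

lemma of_rat_in_subring:
  assumes "is_C_embedding emb R"
  shows "of_rat q \<in> R"
  using assms C_embedding_of_rat[OF assms] unfolding is_C_embedding_def by (metis rangeI subsetD)

lemma subring_mult: "is_subring R \<Longrightarrow> x \<in> R \<Longrightarrow> y \<in> R \<Longrightarrow> x * y \<in> R"
  unfolding is_subring_def by blast

lemma subring_power: "is_subring R \<Longrightarrow> x \<in> R \<Longrightarrow> x ^ n \<in> R"
  by (induction n) (auto simp: is_subring_def)

lemma subring_sum: "is_subring R \<Longrightarrow> (\<And>i. i \<in> S \<Longrightarrow> g i \<in> R) \<Longrightarrow> sum g S \<in> R"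
  by (induction S rule: infinite_finite_induct) (auto simp: is_subring_def)

lemma finite_support_bound:
  assumes "finite {i. v i \<noteq> 0}"
  obtains N :: nat where "\<And>i. N \<le> i \<Longrightarrow> v i = 0"
  using assms unfolding finite_nat_set_iff_bounded by (metis leD mem_Collect_eq)

lemma tau_eq_sum_lessThan:
  assumes "\<And>i. N \<le> i \<Longrightarrow> v i = 0"
  shows "tau f \<alpha> v = (\<Sum>i<N. pochhammer (of_rat \<alpha>) i * v i / f ^ i)"
proof -
  have "tau f \<alpha> v = (\<Sum>i<N. of_rat (pochhammer \<alpha> i) * v i / f ^ i)"
    unfolding tau_def using assms by (intro sum.mono_neutral_left) (auto simp: not_le[symmetric])
  then show ?thesis by (simp add: of_rat_pochhammer)
qed

lemma tau_add:
  assumes "finite {i. v i \<noteq> 0}" and "finite {i. w i \<noteq> 0}"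
  shows "tau f \<alpha> (\<lambda>i. v i + w i) = tau f \<alpha> v + tau f \<alpha> w"
proof -
  obtain N where "\<And>i. N \<le> i \<Longrightarrow> v i = 0" "\<And>i. N \<le> i \<Longrightarrow> w i = 0"
    using assms finite_support_bound by (metis max.boundedE)
  then show ?thesis
    by (simp add: tau_eq_sum_lessThan[of N] distrib_left add_divide_distrib sum.distrib)
qed

lemma tau_mult_act: "tau f \<alpha> (mult_act a v) = a * tau f \<alpha> v"
proof (cases "a = 0")
  case False
  then show ?thesis
    by (simp add: tau_def mult_act_def sum_distrib_left algebra_simps)
qed (simp add: tau_def mult_act_def)

lemma tau_in_localization:
  assumes R: "is_subring R" and emb: "is_C_embedding emb R" and f: "f \<in> R" "f \<noteq> 0"
    and v: "finite {i. v i \<noteq> 0}" "\<And>i. v i \<in> R"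
  shows "tau f \<alpha> v \<in> localization R f"
proof -
  obtain N where N: "\<And>i. N \<le> i \<Longrightarrow> v i = 0" using finite_support_bound[OF v(1)] by blast
  let ?c = "\<lambda>i. pochhammer (of_rat \<alpha>) i :: 'a"
  have "tau f \<alpha> v = (\<Sum>i<N. ?c i * v i / f ^ i)"
    by (rule tau_eq_sum_lessThan[OF N])
  also have "\<dots> = (\<Sum>i<N. ?c i * v i * f ^ (N - i)) / f ^ N"
    unfolding sum_divide_distrib
  proof (rule sum.cong)
    fix i assume "i \<in> {..<N}"
    then have "f ^ N = f ^ i * f ^ (N - i)" by (simp flip: power_add)
    then show "?c i * v i / f ^ i = ?c i * v i * f ^ (N - i) / f ^ N" using f by simp
  qed simp
  finally have "tau f \<alpha> v = (\<Sum>i<N. ?c i * v i * f ^ (N - i)) / f ^ N" .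
  moreover have "(\<Sum>i<N. ?c i * v i * f ^ (N - i)) \<in> R"
    using of_rat_in_subring[OF emb] by (intro subring_sum subring_mult subring_power R f v)
      (simp flip: of_rat_pochhammer)
  ultimately show ?thesis unfolding localization_def by blast
qed

lemma tau_t_act:
  assumes f: "f \<noteq> 0" and v: "finite {i. v i \<noteq> 0}"
  shows "tau f (\<alpha> + 1) (t_act f v) = tau f \<alpha> v * f"
proof -
  obtain N where N: "\<And>i. N \<le> i \<Longrightarrow> v i = 0" using finite_support_bound[OF v] by blast
  define c where "c i = pochhammer (of_rat \<alpha> + 1 :: 'a) i" for i
  have "(\<Sum>i<N. c i * of_nat (Suc i) * v (Suc i) / f ^ i)
      = (\<Sum>i<Suc N. of_nat i * c (i - 1) * v i * f / f ^ i)"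
    using f by (subst sum.lessThan_Suc_shift) (simp add: ac_simps)
  also have "\<dots> = (\<Sum>i<N. of_nat i * c (i - 1) * v i * f / f ^ i)"
    using N by simp
  finally have shifted: "(\<Sum>i<N. c i * of_nat (Suc i) * v (Suc i) / f ^ i)
      = (\<Sum>i<N. of_nat i * c (i - 1) * v i * f / f ^ i)" .
  have "tau f (\<alpha> + 1) (t_act f v)
      = (\<Sum>i<N. c i * f * v i / f ^ i) - (\<Sum>i<N. c i * of_nat (Suc i) * v (Suc i) / f ^ i)"
    using N by (simp add: tau_eq_sum_lessThan[of N] t_act_def c_def of_rat_add
        sum_subtractf[symmetric] algebra_simps diff_divide_distrib)
  also have "\<dots> = (\<Sum>i<N. (c i - of_nat i * c (i - 1)) * v i / f ^ i * f)"
    unfolding shifted sum_subtractf[symmetric] by (simp add: algebra_simps diff_divide_distrib)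
  also have "\<dots> = tau f \<alpha> v * f"
    unfolding c_def pochhammer_plus_one_diff
    by (simp add: tau_eq_sum_lessThan[OF N] sum_distrib_right)
  finally show ?thesis .
qed

lemma tau_dt_act:
  assumes f: "f \<noteq> 0" and v: "finite {i. v i \<noteq> 0}"
  shows "tau f \<alpha> (dt_act v) * f = of_rat \<alpha> * tau f (\<alpha> + 1) v"
proof -
  obtain N where N: "\<And>i. N \<le> i \<Longrightarrow> v i = 0" using finite_support_bound[OF v] by blast
  have "\<And>i. Suc N \<le> i \<Longrightarrow> dt_act v i = 0"
    using N by (simp add: dt_act_def split: nat.split)
  then have "tau f \<alpha> (dt_act v) * f
      = (\<Sum>i<N. pochhammer (of_rat \<alpha>) (Suc i) * v i / f ^ i)"
    using f by (simp add: tau_eq_sum_lessThan[of "Suc N"] sum.lessThan_Suc_shift dt_act_def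
        sum_distrib_left ac_simps del: sum.lessThan_Suc)
  then show ?thesis
    by (simp add: tau_eq_sum_lessThan[OF N] pochhammer_rec of_rat_add sum_distrib_left mult.assoc)
qed

context
  fixes emb :: "complex \<Rightarrow> 'a::field_char_0" and R :: "'a set" and P :: "'a \<Rightarrow> 'a"
  assumes emb: "is_C_embedding emb R" and P: "is_derivation emb R P"
begin

lemma derivation_add: "P (x + y) = P x + P y"
  using P unfolding is_derivation_def by blast

lemma derivation_mult: "P (x * y) = x * P y + P x * y"
  using P unfolding is_derivation_def by blast

lemma derivation_zero: "P 0 = 0"
  using derivation_add[of 0 0] by simp

lemma derivation_sum: "P (sum g S) = (\<Sum>i\<in>S. P (g i))"
  by (induction S rule: infinite_finite_induct) (simp_all add: derivation_zero derivation_add)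

lemma derivation_of_rat_mult: "P (of_rat q * x) = of_rat q * P x"
  using P C_embedding_of_rat[OF emb, of q] unfolding is_derivation_def by metis

lemma derivation_divide:
  assumes "y \<noteq> 0"
  shows "P (x / y) = P x / y - x * P y / y\<^sup>2"
proof -
  have "P x = x / y * P y + P (x / y) * y"
    using derivation_mult[of "x / y" y] assms by simp
  then show ?thesis using assms by (simp add: field_simps power2_eq_square)
qed

lemma derivation_divide_power:
  assumes "f \<noteq> 0"
  shows "P (x / f ^ n) = P x / f ^ n - of_nat n * x * P f / f ^ Suc n"
proof (induction n)
  case (Suc n)
  have "P (x / f ^ Suc n) = P (x / f ^ n / f)" by (simp add: divide_divide_eq_left mult.commute)
  also have "\<dots> = P (x / f ^ n) / f - x / f ^ n * P f / f\<^sup>2"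
    using assms by (rule derivation_divide)
  also have "\<dots> = P x / f ^ Suc n - of_nat (Suc n) * x * P f / f ^ Suc (Suc n)"
    using assms by (simp add: Suc field_simps power2_eq_square)
  finally show ?case .
qed simp

lemma tau_der_act:
  assumes f: "f \<noteq> 0" and v: "finite {i. v i \<noteq> 0}"
  shows "tau f \<alpha> (der_act P f v) = M_der P f \<alpha> (tau f \<alpha> v)"
proof -
  obtain N where N: "\<And>i. N \<le> i \<Longrightarrow> v i = 0" using finite_support_bound[OF v] by blast
  define a :: 'a where "a = of_rat \<alpha>"
  define c where "c i = pochhammer a i" for i
  have Pc: "P (c i * x) = c i * P x" for i x
    using derivation_of_rat_mult by (simp add: c_def a_def flip: of_rat_pochhammer)
  have "\<And>i. Suc N \<le> i \<Longrightarrow> der_act P f v i = 0"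
    using N derivation_zero by (auto simp: der_act_def split: nat.split)
  then have "tau f \<alpha> (der_act P f v)
      = (\<Sum>i<Suc N. c i * P (v i) / f ^ i)
        - (\<Sum>i<Suc N. c i * (case i of 0 \<Rightarrow> 0 | Suc j \<Rightarrow> P f * v j) / f ^ i)"
    by (simp add: tau_eq_sum_lessThan[of "Suc N"] der_act_def c_def a_def right_diff_distrib
        diff_divide_distrib sum_subtractf del: sum.lessThan_Suc)
  also have "(\<Sum>i<Suc N. c i * P (v i) / f ^ i) = (\<Sum>i<N. c i * P (v i) / f ^ i)"
    using N derivation_zero by simp
  also have "(\<Sum>i<Suc N. c i * (case i of 0 \<Rightarrow> 0 | Suc j \<Rightarrow> P f * v j) / f ^ i)
      = (\<Sum>i<N. c (Suc i) * P f * v i / f ^ Suc i)"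
    by (subst sum.lessThan_Suc_shift) (simp add: mult.assoc)
  also have "(\<Sum>i<N. c i * P (v i) / f ^ i) - (\<Sum>i<N. c (Suc i) * P f * v i / f ^ Suc i)
      = (\<Sum>i<N. P (c i * v i / f ^ i) - a * (c i * v i / f ^ i) * P f / f)"
    unfolding sum_subtractf[symmetric]
  proof (rule sum.cong)
    fix i
    have c_Suc: "c (Suc i) = (a + of_nat i) * c i" by (simp add: c_def pochhammer_rec')
    have P_term: "P (c i * v i / f ^ i) = c i * P (v i / f ^ i)"
      using Pc[of i "v i / f ^ i"] by simp
    show "c i * P (v i) / f ^ i - c (Suc i) * P f * v i / f ^ Suc i
        = P (c i * v i / f ^ i) - a * (c i * v i / f ^ i) * P f / f"
      using f by (simp add: c_Suc P_term derivation_divide_power field_simps)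
  qed simp
  also have "\<dots> = M_der P f \<alpha> (tau f \<alpha> v)"
    by (simp add: M_der_def tau_eq_sum_lessThan[OF N] derivation_sum a_def c_def
        sum_subtractf sum_distrib_left sum_distrib_right sum_divide_distrib)
  finally show ?thesis .
qed

end

theorem mainTheorem15:
  fixes R :: "'a::field_char_0 set" and emb :: "complex \<Rightarrow> 'a" and f :: 'a
    and V :: "rat \<Rightarrow> (nat \<Rightarrow> 'a) set" and \<alpha> :: rat
  assumes O_ring: "is_subring R"
    and emb: "is_C_embedding emb R"
    and f_in: "f \<in> R" and f_nz: "f \<noteq> 0"
    and V_sub: "\<And>\<beta>. V \<beta> \<subseteq> iplus R"
    and V_decr: "\<And>\<beta> \<gamma>. \<beta> \<le> \<gamma> \<Longrightarrow> V \<gamma> \<subseteq> V \<beta>"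
    and V_t: "\<And>\<beta> v. v \<in> V \<beta> \<Longrightarrow> t_act f v \<in> V (\<beta> + 1)"
    and V_dt: "\<And>\<beta> v. v \<in> V \<beta> \<Longrightarrow> dt_act v \<in> V (\<beta> - 1)"
    and V_add: "\<And>\<beta> v w. v \<in> V \<beta> \<Longrightarrow> w \<in> V \<beta> \<Longrightarrow> (\<lambda>i. v i + w i) \<in> V \<beta>"
    and V_mult: "\<And>\<beta> a v. a \<in> R \<Longrightarrow> v \<in> V \<beta> \<Longrightarrow> mult_act a v \<in> V \<beta>"
    and V_der: "\<And>\<beta> P v. is_derivation emb R P \<Longrightarrow> v \<in> V \<beta> \<Longrightarrow> der_act P f v \<in> V \<beta>"
  shows "(\<forall>v\<in>V \<alpha>. tau f \<alpha> v \<in> localization R f)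
    \<and> (\<forall>v\<in>V \<alpha>. \<forall>w\<in>V \<alpha>. tau f \<alpha> (\<lambda>i. v i + w i) = tau f \<alpha> v + tau f \<alpha> w)
    \<and> (\<forall>a\<in>R. \<forall>v\<in>V \<alpha>. tau f \<alpha> (mult_act a v) = a * tau f \<alpha> v)
    \<and> (\<forall>P. is_derivation emb R P \<longrightarrow>
         (\<forall>v\<in>V \<alpha>. tau f \<alpha> (der_act P f v) = M_der P f \<alpha> (tau f \<alpha> v)))
    \<and> (\<forall>v\<in>V \<alpha>. tau f (\<alpha> + 1) (t_act f v) = tau f \<alpha> v * f)
    \<and> (\<forall>v\<in>V (\<alpha> + 1). tau f \<alpha> (dt_act v) * f = of_rat \<alpha> * tau f (\<alpha> + 1) v)"
proof -
  have finite_support: "finite {i. v i \<noteq> 0}" and coeff_in: "v i \<in> R" if "v \<in> V \<beta>" for v \<beta> i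
    using V_sub[of \<beta>] that unfolding iplus_def by auto
  show ?thesis
  proof (intro conjI ballI allI impI)
    fix v assume v: "v \<in> V \<alpha>"
    show "tau f \<alpha> v \<in> localization R f"
      by (rule tau_in_localization[OF O_ring emb f_in f_nz finite_support[OF v] coeff_in[OF v]])
    show "tau f (\<alpha> + 1) (t_act f v) = tau f \<alpha> v * f"
      by (rule tau_t_act[OF f_nz finite_support[OF v]])
  next
    fix v w assume "v \<in> V \<alpha>" "w \<in> V \<alpha>"
    then show "tau f \<alpha> (\<lambda>i. v i + w i) = tau f \<alpha> v + tau f \<alpha> w"
      by (simp add: tau_add finite_support)
  next
    fix a v
    show "tau f \<alpha> (mult_act a v) = a * tau f \<alpha> v" by (rule tau_mult_act)
  next
    fix P v assume P: "is_derivation emb R P" and v: "v \<in> V \<alpha>"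
    show "tau f \<alpha> (der_act P f v) = M_der P f \<alpha> (tau f \<alpha> v)"
      by (rule tau_der_act[OF emb P f_nz finite_support[OF v]])
  next
    fix v assume v: "v \<in> V (\<alpha> + 1)"
    show "tau f \<alpha> (dt_act v) * f = of_rat \<alpha> * tau f (\<alpha> + 1) v"
      by (rule tau_dt_act[OF f_nz finite_support[OF v]])
  qed
qed

end
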